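(* Let $G$ be a finite group, let $\chi$ be an irreducible complex character of $G$, and write $\chi\otimes\bar\chi=a_1\chi_1+\cdots+a_q\chi_q$, where the $a_i$ are positive integers and the $\chi_i$ are irreducible characters of $G$ of dimensions $n_i=\chi_i(1)$, $i=1,\dots,q$. Then for every $g\in G$, $$c(g)\le\frac{(a_1/n_1^2)\chi_1(g)+\cdots+(a_q/n_q^2)\chi_q(g)}{a_1n_1+\cdots+a_qn_q},$$ and therefore $$c(G)\le\frac{a_1/n_1+\cdots+a_q/n_q}{a_1n_1+\cdots+a_qn_q}.$$
   Context: For $g\in G$, $c(g)=|\{(x,y)\in G\times G:[x,y]=g\}|/|G|^2$, and $c(G)=c(1)$. $\bar\chi$ denotes the complex conjugate character. *)

theory Defs
  imports "HOL-Algebra.Group" "Jordan_Normal_Form.Matrix"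
begin

definition mat_trace :: "complex mat \<Rightarrow> complex" where
  "mat_trace A = (\<Sum>i<dim_row A. A $$ (i, i))"

definition is_rep :: "('a, 'b) monoid_scheme \<Rightarrow> nat \<Rightarrow> ('a \<Rightarrow> complex mat) \<Rightarrow> bool" where
  "is_rep G n \<rho> \<longleftrightarrow>
     (\<forall>g\<in>carrier G. \<rho> g \<in> carrier_mat n n) \<and>
     (\<forall>g\<in>carrier G. \<forall>h\<in>carrier G. \<rho> (g \<otimes>\<^bsub>G\<^esub> h) = \<rho> g * \<rho> h) \<and>
     \<rho> \<one>\<^bsub>G\<^esub> = 1\<^sub>m n"

definition is_subspace :: "nat \<Rightarrow> complex vec set \<Rightarrow> bool" where
  "is_subspace n W \<longleftrightarrow> W \<subseteq> carrier_vec n \<and> 0\<^sub>v n \<in> W \<and>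
     (\<forall>v\<in>W. \<forall>w\<in>W. v + w \<in> W) \<and> (\<forall>c. \<forall>v\<in>W. c \<cdot>\<^sub>v v \<in> W)"

definition irreducible_rep :: "('a, 'b) monoid_scheme \<Rightarrow> nat \<Rightarrow> ('a \<Rightarrow> complex mat) \<Rightarrow> bool" where
  "irreducible_rep G n \<rho> \<longleftrightarrow> is_rep G n \<rho> \<and> n \<ge> 1 \<and>
     (\<forall>W. is_subspace n W \<and> (\<forall>g\<in>carrier G. \<forall>w\<in>W. \<rho> g *\<^sub>v w \<in> W)
          \<longrightarrow> W = {0\<^sub>v n} \<or> W = carrier_vec n)"

definition irr_char :: "('a, 'b) monoid_scheme \<Rightarrow> ('a \<Rightarrow> complex) \<Rightarrow> bool" where
  "irr_char G \<chi> \<longleftrightarrow> (\<exists>n \<rho>. irreducible_rep G n \<rho> \<and>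
     (\<forall>g\<in>carrier G. \<chi> g = mat_trace (\<rho> g)))"

definition commutator :: "('a, 'b) monoid_scheme \<Rightarrow> 'a \<Rightarrow> 'a \<Rightarrow> 'a" where
  "commutator G x y = inv\<^bsub>G\<^esub> x \<otimes>\<^bsub>G\<^esub> inv\<^bsub>G\<^esub> y \<otimes>\<^bsub>G\<^esub> x \<otimes>\<^bsub>G\<^esub> y"

definition comm_prob :: "('a, 'b) monoid_scheme \<Rightarrow> 'a \<Rightarrow> real" where
  "comm_prob G g = real (card {(x, y). x \<in> carrier G \<and> y \<in> carrier G \<and> commutator G x y = g})
     / real (card (carrier G)) ^ 2"

end

theory Submission
  imports Defs "Jordan_Normal_Form.Spectral_Radius"
begin

text \<open>
  For an irreducible representation sigma of degree m, Schur's lemma makes the average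
  sum_x sigma(x^-1) A sigma(x) equal to the scalar (|G|/m) tr A. Averaging over both variables
  of a commutator gives sum_{x,y} psi([x,y] h) = (|G|/psi(1))^2 psi(h) for every irreducible
  character psi. Hence summing |chi([x,y] g)|^2 = sum_i a_i chi_i([x,y] g) over all pairs gives
  |G|^2 sum_i (a_i/n_i^2) chi_i(g), while the pairs with [x,y] = g^-1 alone contribute
  |G|^2 c(g^-1) chi(1)^2 = |G|^2 c(g) sum_i a_i n_i.
\<close>

lemma index_mult_mat_sum:
  assumes "A \<in> carrier_mat n k" "B \<in> carrier_mat k l" "i < n" "j < l"
  shows "(A * B) $$ (i, j) = (\<Sum>r<k. A $$ (i, r) * B $$ (r, j))"
  using assms by (auto simp: scalar_prod_def lessThan_atLeast0 intro!: sum.cong)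

lemma mat_trace_mult:
  assumes "A \<in> carrier_mat n k" "B \<in> carrier_mat k n"
  shows "mat_trace (A * B) = (\<Sum>i<n. \<Sum>j<k. A $$ (i, j) * B $$ (j, i))"
  using assms
  by (auto simp: mat_trace_def index_mult_mat_sum simp del: index_mult_mat(1) intro!: sum.cong)

lemma mat_trace_mult_comm:
  assumes "A \<in> carrier_mat n k" "B \<in> carrier_mat k n"
  shows "mat_trace (A * B) = mat_trace (B * A)"
proof -
  have "mat_trace (A * B) = (\<Sum>j<k. \<Sum>i<n. B $$ (j, i) * A $$ (i, j))"
    using assms by (subst sum.swap) (simp add: mat_trace_mult mult.commute)
  also have "\<dots> = mat_trace (B * A)"
    using assms by (simp add: mat_trace_mult)
  finally show ?thesis .
qed

lemma mat_trace_one [simp]: "mat_trace (1\<^sub>m n) = of_nat n"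
  by (simp add: mat_trace_def)

lemma mat_trace_smult: "A \<in> carrier_mat n n \<Longrightarrow> mat_trace (c \<cdot>\<^sub>m A) = c * mat_trace A"
  by (simp add: mat_trace_def sum_distrib_left)

lemma index_mult_elementary_mat:
  fixes P Q :: "'a::semiring_1 mat"
  assumes "P \<in> carrier_mat p n" "Q \<in> carrier_mat l q" "a < n" "b < l" "i < p" "j < q"
  shows "(P * mat n l (\<lambda>(s, r). if s = a \<and> r = b then 1 else 0) * Q) $$ (i, j)
    = P $$ (i, a) * Q $$ (b, j)"
proof -
  let ?E = "mat n l (\<lambda>(s, r). if s = a \<and> r = b then 1 else 0)"
  have "(P * ?E) $$ (i, r) = (if r = b then P $$ (i, a) else 0)" if "r < l" for r
    using assms that by (auto simp: index_mult_mat_sum[of _ p n _ l] if_distrib cong: if_cong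
        simp del: index_mult_mat(1))
  then have "(P * ?E * Q) $$ (i, j) = (\<Sum>r<l. (if r = b then P $$ (i, a) else 0) * Q $$ (r, j))"
    using assms by (simp add: index_mult_mat_sum[of _ p l _ q] del: index_mult_mat(1))
  also have "\<dots> = (\<Sum>r<l. if r = b then P $$ (i, a) * Q $$ (r, j) else 0)"
    by (intro sum.cong) auto
  also have "\<dots> = P $$ (i, a) * Q $$ (b, j)"
    using assms by simp
  finally show ?thesis .
qed

text \<open>Matrices do not form a \<open>comm_monoid_add\<close> (the dimensions are part of the value), so
  finite sums of square matrices are taken entrywise.\<close>

definition mat_sum :: "nat \<Rightarrow> ('i \<Rightarrow> 'a::comm_monoid_add mat) \<Rightarrow> 'i set \<Rightarrow> 'a mat" where
  "mat_sum n F I = mat n n (\<lambda>ij. \<Sum>i\<in>I. F i $$ ij)"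

lemma mat_sum_carrier [simp]: "mat_sum n F I \<in> carrier_mat n n"
  by (simp add: mat_sum_def)

lemma dim_mat_sum [simp]: "dim_row (mat_sum n F I) = n" "dim_col (mat_sum n F I) = n"
  by (simp_all add: mat_sum_def)

lemma index_mat_sum [simp]: "i < n \<Longrightarrow> j < n \<Longrightarrow> mat_sum n F I $$ (i, j) = (\<Sum>x\<in>I. F x $$ (i, j))"
  by (simp add: mat_sum_def)

lemma mat_sum_cong: "(\<And>x. x \<in> I \<Longrightarrow> F x = F' x) \<Longrightarrow> mat_sum n F I = mat_sum n F' I"
  by (simp add: mat_sum_def)

lemma mat_trace_mat_sum:
  assumes "\<And>i. i \<in> I \<Longrightarrow> F i \<in> carrier_mat n n"
  shows "mat_trace (mat_sum n F I) = (\<Sum>i\<in>I. mat_trace (F i))"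
  using assms by (auto simp: mat_trace_def sum.swap[of _ I] intro!: sum.cong)

lemma mult_mat_sum_right:
  assumes "\<And>i. i \<in> I \<Longrightarrow> F i \<in> carrier_mat n n" "B \<in> carrier_mat n n"
  shows "mat_sum n F I * B = mat_sum n (\<lambda>i. F i * B) I"
proof (rule eq_matI)
  fix k l assume "k < dim_row (mat_sum n (\<lambda>i. F i * B) I)" "l < dim_col (mat_sum n (\<lambda>i. F i * B) I)"
  then have kl: "k < n" "l < n" by simp_all
  have "(mat_sum n F I * B) $$ (k, l) = (\<Sum>r<n. (\<Sum>i\<in>I. F i $$ (k, r)) * B $$ (r, l))"
    using kl by (simp add: index_mult_mat_sum[OF mat_sum_carrier assms(2)] del: index_mult_mat(1))
  also have "\<dots> = (\<Sum>i\<in>I. \<Sum>r<n. F i $$ (k, r) * B $$ (r, l))"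
    by (simp add: sum_distrib_right sum.swap[of _ I])
  also have "\<dots> = (\<Sum>i\<in>I. (F i * B) $$ (k, l))"
    by (intro sum.cong refl index_mult_mat_sum[symmetric]) (use assms kl in auto)
  also have "\<dots> = mat_sum n (\<lambda>i. F i * B) I $$ (k, l)"
    using kl by simp
  finally show "(mat_sum n F I * B) $$ (k, l) = mat_sum n (\<lambda>i. F i * B) I $$ (k, l)" .
qed (use assms in auto)

lemma mat_trace_mat_sum_mult:
  assumes "\<And>i. i \<in> I \<Longrightarrow> F i \<in> carrier_mat n n" "B \<in> carrier_mat n n"
  shows "mat_trace (mat_sum n F I * B) = (\<Sum>i\<in>I. mat_trace (F i * B))"
  using assms by (simp add: mult_mat_sum_right mat_trace_mat_sum mult_carrier_mat[of _ n n _ n])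

lemma mult_mat_sum_left:
  assumes "\<And>i. i \<in> I \<Longrightarrow> F i \<in> carrier_mat n n" "A \<in> carrier_mat n n"
  shows "A * mat_sum n F I = mat_sum n (\<lambda>i. A * F i) I"
proof (rule eq_matI)
  fix k l assume "k < dim_row (mat_sum n (\<lambda>i. A * F i) I)" "l < dim_col (mat_sum n (\<lambda>i. A * F i) I)"
  then have kl: "k < n" "l < n" by simp_all
  have "(A * mat_sum n F I) $$ (k, l) = (\<Sum>r<n. A $$ (k, r) * (\<Sum>i\<in>I. F i $$ (r, l)))"
    using kl by (simp add: index_mult_mat_sum[OF assms(2) mat_sum_carrier] del: index_mult_mat(1))
  also have "\<dots> = (\<Sum>i\<in>I. \<Sum>r<n. A $$ (k, r) * F i $$ (r, l))"
    by (simp add: sum_distrib_left sum.swap[of _ I])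
  also have "\<dots> = (\<Sum>i\<in>I. (A * F i) $$ (k, l))"
    by (intro sum.cong refl index_mult_mat_sum[symmetric]) (use assms kl in auto)
  also have "\<dots> = mat_sum n (\<lambda>i. A * F i) I $$ (k, l)"
    using kl by simp
  finally show "(A * mat_sum n F I) $$ (k, l) = mat_sum n (\<lambda>i. A * F i) I $$ (k, l)" .
qed (use assms in auto)

lemma irreducible_rep_commutant_scalar:
  assumes irr: "irreducible_rep G m \<sigma>" and M: "M \<in> carrier_mat m m"
    and comm: "\<And>g. g \<in> carrier G \<Longrightarrow> \<sigma> g * M = M * \<sigma> g"
  shows "\<exists>c. M = c \<cdot>\<^sub>m 1\<^sub>m m"
proof -
  have "m > 0" and \<sigma>: "\<And>g. g \<in> carrier G \<Longrightarrow> \<sigma> g \<in> carrier_mat m m"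
    using irr unfolding irreducible_rep_def is_rep_def by auto
  obtain c v where v: "v \<in> carrier_vec m" "v \<noteq> 0\<^sub>v m" "M *\<^sub>v v = c \<cdot>\<^sub>v v"
    using spectrum_non_empty[OF M \<open>m > 0\<close>] M
    unfolding spectrum_def eigenvalue_def eigenvector_def by auto
  define W where "W = {w \<in> carrier_vec m. M *\<^sub>v w = c \<cdot>\<^sub>v w}"
  have "is_subspace m W"
    unfolding is_subspace_def
  proof (intro conjI ballI allI)
    fix x y assume "x \<in> W" "y \<in> W"
    then show "x + y \<in> W"
      using M by (auto simp: W_def mult_add_distrib_mat_vec smult_add_distrib_vec)
  next
    fix k x assume "x \<in> W"
    then show "k \<cdot>\<^sub>v x \<in> W"
      using M by (auto simp: W_def mult_mat_vec smult_smult_assoc mult.commute)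
  qed (use M in \<open>auto simp: W_def\<close>)
  moreover have "\<sigma> g *\<^sub>v w \<in> W" if g: "g \<in> carrier G" and w: "w \<in> W" for g w
  proof -
    have wc: "w \<in> carrier_vec m" using w W_def by auto
    have "M *\<^sub>v (\<sigma> g *\<^sub>v w) = (\<sigma> g * M) *\<^sub>v w" using M \<sigma>[OF g] wc comm[OF g] by simp
    also have "\<dots> = c \<cdot>\<^sub>v (\<sigma> g *\<^sub>v w)" using M \<sigma>[OF g] w by (simp add: W_def mult_mat_vec)
    finally show ?thesis using W_def \<sigma>[OF g] wc by auto
  qed
  ultimately have "W = {0\<^sub>v m} \<or> W = carrier_vec m"
    using irr unfolding irreducible_rep_def by blast
  then have W: "W = carrier_vec m" using v W_def by auto
  have "M = c \<cdot>\<^sub>m 1\<^sub>m m"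
  proof (rule eq_matI)
    fix i j assume "i < dim_row (c \<cdot>\<^sub>m 1\<^sub>m m)" "j < dim_col (c \<cdot>\<^sub>m 1\<^sub>m m)"
    then have ij: "i < m" "j < m" by auto
    have "unit_vec m j \<in> W" using W by simp
    then have "M *\<^sub>v unit_vec m j = c \<cdot>\<^sub>v unit_vec m j" unfolding W_def by simp
    then have "(M *\<^sub>v unit_vec m j) $ i = (c \<cdot>\<^sub>v unit_vec m j) $ i" by simp
    then show "M $$ (i, j) = (c \<cdot>\<^sub>m 1\<^sub>m m) $$ (i, j)" using M ij by simp
  qed (use M in auto)
  then show ?thesis ..
qed

lemma sum_carrier_mult_right:
  fixes G (structure)
  assumes "group G" "g \<in> carrier G"
  shows "(\<Sum>x\<in>carrier G. f (x \<otimes> g)) = (\<Sum>x\<in>carrier G. f x)"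
proof -
  interpret group G by fact
  show ?thesis
    by (rule sum.reindex_bij_witness[where i = "\<lambda>y. y \<otimes> inv g" and j = "\<lambda>x. x \<otimes> g"])
      (use assms(2) in \<open>auto simp: m_assoc\<close>)
qed

locale finite_irrep = group G for G :: "('a, 'b) monoid_scheme" (structure) +
  fixes m :: nat and \<sigma> :: "'a \<Rightarrow> complex mat"
  assumes finite_carrier: "finite (carrier G)"
    and irreducible: "irreducible_rep G m \<sigma>"
begin

lemma degree_pos: "m > 0"
  using irreducible unfolding irreducible_rep_def by simp

lemma rep_carrier [simp]: "g \<in> carrier G \<Longrightarrow> \<sigma> g \<in> carrier_mat m m"
  using irreducible unfolding irreducible_rep_def is_rep_def by simp

lemma rep_dim [simp]: "g \<in> carrier G \<Longrightarrow> dim_row (\<sigma> g) = m" "g \<in> carrier G \<Longrightarrow> dim_col (\<sigma> g) = m"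
  using rep_carrier by blast+

lemma rep_mult: "g \<in> carrier G \<Longrightarrow> h \<in> carrier G \<Longrightarrow> \<sigma> (g \<otimes> h) = \<sigma> g * \<sigma> h"
  using irreducible unfolding irreducible_rep_def is_rep_def by simp

lemma rep_one: "\<sigma> \<one> = 1\<^sub>m m"
  using irreducible unfolding irreducible_rep_def is_rep_def by simp

lemma rep_mult_inv: "g \<in> carrier G \<Longrightarrow> \<sigma> g * \<sigma> (inv g) = 1\<^sub>m m"
  by (simp add: rep_mult[symmetric] rep_one)

lemma mat_trace_rep_conj:
  assumes "x \<in> carrier G" "A \<in> carrier_mat m m"
  shows "mat_trace (\<sigma> (inv x) * A * \<sigma> x) = mat_trace A"
proof -
  have "mat_trace (\<sigma> (inv x) * A * \<sigma> x) = mat_trace (\<sigma> x * (\<sigma> (inv x) * A))"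
    using assms by (intro mat_trace_mult_comm[of _ m m]) (auto intro!: mult_carrier_mat)
  also have "\<dots> = mat_trace (\<sigma> x * \<sigma> (inv x) * A)"
    using assms by (simp add: assoc_mult_mat[of _ m m _ m _ m])
  finally show ?thesis
    using assms by (simp add: rep_mult_inv)
qed

lemma mat_sum_carrier_mult_right:
  assumes "g \<in> carrier G"
  shows "mat_sum n (\<lambda>x. F (x \<otimes> g)) (carrier G) = mat_sum n F (carrier G)"
  unfolding mat_sum_def by (intro cong_mat refl sum_carrier_mult_right[OF is_group] assms)

definition conj_average :: "complex mat \<Rightarrow> complex mat" where
  "conj_average A = mat_sum m (\<lambda>x. \<sigma> (inv x) * A * \<sigma> x) (carrier G)"

lemma conj_average_commutes:
  assumes g: "g \<in> carrier G" and A: "A \<in> carrier_mat m m"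
  shows "\<sigma> g * conj_average A = conj_average A * \<sigma> g"
proof -
  have "\<sigma> g * conj_average A = mat_sum m (\<lambda>x. \<sigma> g * (\<sigma> (inv x) * A * \<sigma> x)) (carrier G)"
    using g A unfolding conj_average_def
    by (intro mult_mat_sum_left) (auto intro!: mult_carrier_mat)
  also have "\<dots> = mat_sum m (\<lambda>x. \<sigma> (g \<otimes> inv x) * A * \<sigma> x) (carrier G)"
    using g A by (intro mat_sum_cong)
      (simp add: rep_mult assoc_mult_mat[of _ m m _ m _ m] mult_carrier_mat[of _ m m _ m])
  also have "\<dots> = mat_sum m (\<lambda>x. \<sigma> (g \<otimes> inv (x \<otimes> g)) * A * \<sigma> (x \<otimes> g)) (carrier G)"
    using g by (rule mat_sum_carrier_mult_right[symmetric])
  also have "\<dots> = mat_sum m (\<lambda>x. \<sigma> (inv x) * A * \<sigma> x * \<sigma> g) (carrier G)"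
    using g A by (intro mat_sum_cong)
      (simp add: inv_mult_group m_assoc[symmetric] rep_mult assoc_mult_mat[of _ m m _ m _ m]
        mult_carrier_mat[of _ m m _ m])
  also have "\<dots> = conj_average A * \<sigma> g"
    using g A unfolding conj_average_def
    by (intro mult_mat_sum_right[symmetric]) (auto intro!: mult_carrier_mat)
  finally show ?thesis .
qed

lemma conj_average_eq:
  assumes A: "A \<in> carrier_mat m m"
  shows "conj_average A = (of_nat (card (carrier G)) / of_nat m * mat_trace A) \<cdot>\<^sub>m 1\<^sub>m m"
proof -
  obtain c where c: "conj_average A = c \<cdot>\<^sub>m 1\<^sub>m m"
    using irreducible_rep_commutant_scalar[OF irreducible _ conj_average_commutes[OF _ A]]
    unfolding conj_average_def by auto
  have "of_nat m * c = mat_trace (conj_average A)"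
    by (simp add: c mat_trace_smult[of "1\<^sub>m m" m])
  also have "\<dots> = of_nat (card (carrier G)) * mat_trace A"
    using A unfolding conj_average_def
    by (subst mat_trace_mat_sum) (auto simp: mat_trace_rep_conj intro!: mult_carrier_mat)
  finally have "c = of_nat (card (carrier G)) / of_nat m * mat_trace A"
    using degree_pos by (simp add: field_simps)
  then show ?thesis by (simp add: c)
qed

lemma mat_trace_conj_average_mult:
  assumes "A \<in> carrier_mat m m" "B \<in> carrier_mat m m"
  shows "mat_trace (conj_average A * B)
    = of_nat (card (carrier G)) / of_nat m * mat_trace A * mat_trace B"
  using assms
  by (simp add: conj_average_eq mult_smult_assoc_mat[of "1\<^sub>m m" m m B m] mat_trace_smult[of B m])

lemma schur_orthogonality:
  assumes "i < m" "a < m" "b < m" "j < m"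
  shows "(\<Sum>x\<in>carrier G. \<sigma> (inv x) $$ (i, a) * \<sigma> x $$ (b, j))
    = (if i = j \<and> a = b then of_nat (card (carrier G)) / of_nat m else 0)"
proof -
  define E :: "complex mat" where "E = mat m m (\<lambda>(s, r). if s = a \<and> r = b then 1 else 0)"
  have E: "E \<in> carrier_mat m m" by (simp add: E_def)
  have trace_E: "mat_trace E = (if a = b then 1 else 0)"
    using assms by (simp add: E_def mat_trace_def)
  have "(\<Sum>x\<in>carrier G. \<sigma> (inv x) $$ (i, a) * \<sigma> x $$ (b, j)) = conj_average E $$ (i, j)"
    using assms unfolding conj_average_def E_def
    by (simp add: index_mult_elementary_mat[of _ m m _ m m] del: index_mult_mat(1))
  also have "\<dots> = (if i = j \<and> a = b then of_nat (card (carrier G)) / of_nat m else 0)"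
    using assms by (simp add: conj_average_eq[OF E] trace_E)
  finally show ?thesis .
qed

lemma sum_trace_mult_trace:
  assumes B: "B \<in> carrier_mat m m"
  shows "(\<Sum>y\<in>carrier G. mat_trace (\<sigma> (inv y)) * mat_trace (\<sigma> y * B))
    = of_nat (card (carrier G)) / of_nat m * mat_trace B"
proof -
  let ?c = "of_nat (card (carrier G)) / of_nat m :: complex"
  have "(\<Sum>y\<in>carrier G. mat_trace (\<sigma> (inv y)) * mat_trace (\<sigma> y * B))
      = (\<Sum>y\<in>carrier G. \<Sum>k<m. \<Sum>l<m. \<Sum>a<m. \<sigma> (inv y) $$ (a, a) * (\<sigma> y $$ (k, l) * B $$ (l, k)))"
    using B by (intro sum.cong refl)
      (simp add: mat_trace_mult[of _ m m],
       simp add: mat_trace_def sum_distrib_left sum_distrib_right)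
  also have "\<dots> = (\<Sum>k<m. \<Sum>l<m. \<Sum>a<m. B $$ (l, k) *
      (\<Sum>y\<in>carrier G. \<sigma> (inv y) $$ (a, a) * \<sigma> y $$ (k, l)))"
    by (simp add: sum.swap[of _ "carrier G"] sum_distrib_left mult_ac)
  also have "\<dots> = (\<Sum>k<m. \<Sum>l<m. \<Sum>a<m. B $$ (l, k) * (if a = l \<and> a = k then ?c else 0))"
    by (simp add: schur_orthogonality)
  also have "\<dots> = (\<Sum>k<m. \<Sum>l<m. if l = k then B $$ (l, k) * ?c else 0)"
  proof (intro sum.cong refl)
    fix k l assume "l \<in> {..<m}"
    then show "(\<Sum>a<m. B $$ (l, k) * (if a = l \<and> a = k then ?c else 0))
      = (if l = k then B $$ (l, k) * ?c else 0)"
      by (cases "l = k") (auto simp: sum_distrib_left[symmetric] intro: sum.neutral)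
  qed
  also have "\<dots> = (\<Sum>k<m. ?c * B $$ (k, k))"
    by (simp add: mult.commute)
  also have "\<dots> = ?c * mat_trace B"
    using B by (simp add: mat_trace_def sum_distrib_left)
  finally show ?thesis .
qed

lemma sum_trace_commutator:
  assumes h: "h \<in> carrier G"
  shows "(\<Sum>x\<in>carrier G. \<Sum>y\<in>carrier G. mat_trace (\<sigma> (commutator G x y \<otimes> h)))
    = (of_nat (card (carrier G)) / of_nat m)\<^sup>2 * mat_trace (\<sigma> h)"
proof -
  define c :: complex where "c = of_nat (card (carrier G)) / of_nat m"
  have "(\<Sum>x\<in>carrier G. \<Sum>y\<in>carrier G. mat_trace (\<sigma> (commutator G x y \<otimes> h)))
      = (\<Sum>y\<in>carrier G. \<Sum>x\<in>carrier G. mat_trace (\<sigma> (inv x) * \<sigma> (inv y) * \<sigma> x * \<sigma> (y \<otimes> h)))"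
    using h by (subst sum.swap) (intro sum.cong refl, simp add: commutator_def m_assoc rep_mult
        assoc_mult_mat[of _ m m _ m _ m] mult_carrier_mat[of _ m m _ m])
  also have "\<dots> = (\<Sum>y\<in>carrier G. mat_trace (conj_average (\<sigma> (inv y)) * \<sigma> (y \<otimes> h)))"
    using h unfolding conj_average_def
    by (auto simp: mat_trace_mat_sum_mult mult_carrier_mat[of _ m m _ m] intro!: sum.cong)
  also have "\<dots> = (\<Sum>y\<in>carrier G. c * (mat_trace (\<sigma> (inv y)) * mat_trace (\<sigma> y * \<sigma> h)))"
    using h by (intro sum.cong refl)
      (simp add: mat_trace_conj_average_mult c_def rep_mult mult_carrier_mat[of _ m m _ m])
  also have "\<dots> = c * (\<Sum>y\<in>carrier G. mat_trace (\<sigma> (inv y)) * mat_trace (\<sigma> y * \<sigma> h))"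
    by (simp add: sum_distrib_left)
  also have "\<dots> = c * (c * mat_trace (\<sigma> h))"
    using h by (simp add: sum_trace_mult_trace c_def)
  finally show ?thesis by (simp add: c_def power2_eq_square)
qed

end

lemma commutator_closed [simp]:
  fixes G (structure)
  assumes "group G" "x \<in> carrier G" "y \<in> carrier G"
  shows "commutator G x y \<in> carrier G"
  using assms
  by (simp add: commutator_def group.subgroup_self subgroup.m_closed subgroup.m_inv_closed)

lemma commutator_swap:
  fixes G (structure)
  assumes "group G" "x \<in> carrier G" "y \<in> carrier G"
  shows "commutator G y x = inv (commutator G x y)"
proof -
  interpret group G by fact
  show ?thesis
    using assms by (simp add: commutator_def inv_mult_group m_assoc)
qed

lemma irr_char_degree:
  fixes G (structure)
  assumes "group G" "irr_char G \<psi>"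
  obtains n where "n > 0" "\<psi> \<one> = of_nat n"
proof -
  obtain n \<rho> where irr: "irreducible_rep G n \<rho>" and \<psi>: "\<forall>g\<in>carrier G. \<psi> g = mat_trace (\<rho> g)"
    using assms(2) unfolding irr_char_def by blast
  then have "\<psi> \<one> = of_nat n"
    using assms(1) irr unfolding irreducible_rep_def is_rep_def by (simp add: group.is_monoid)
  moreover have "n > 0"
    using irr unfolding irreducible_rep_def by simp
  ultimately show ?thesis using that by blast
qed

lemma irr_char_sum_commutator:
  fixes G (structure)
  assumes "group G" "finite (carrier G)" "irr_char G \<psi>" "h \<in> carrier G"
  shows "(\<Sum>x\<in>carrier G. \<Sum>y\<in>carrier G. \<psi> (commutator G x y \<otimes> h))
    = (of_nat (card (carrier G)) / \<psi> \<one>)\<^sup>2 * \<psi> h"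
proof -
  obtain n \<rho> where irr: "irreducible_rep G n \<rho>" and \<psi>: "\<forall>g\<in>carrier G. \<psi> g = mat_trace (\<rho> g)"
    using assms(3) unfolding irr_char_def by blast
  interpret finite_irrep G n \<rho>
    using assms(1,2) irr by (simp add: finite_irrep_def finite_irrep_axioms_def)
  have "(\<Sum>x\<in>carrier G. \<Sum>y\<in>carrier G. \<psi> (commutator G x y \<otimes> h))
      = (\<Sum>x\<in>carrier G. \<Sum>y\<in>carrier G. mat_trace (\<rho> (commutator G x y \<otimes> h)))"
    using assms(1,4) \<psi> by simp
  also have "\<dots> = (of_nat (card (carrier G)) / of_nat n)\<^sup>2 * \<psi> h"
    using assms(4) \<psi> by (simp add: sum_trace_commutator)
  finally show ?thesis
    using \<psi> by (simp add: rep_one)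
qed

lemma sum_commutator_irr_char_combination:
  fixes G (structure)
  assumes "group G" "finite (carrier G)" "\<And>i. i < q \<Longrightarrow> irr_char G (\<chi>s i)"
    and "\<And>g. g \<in> carrier G \<Longrightarrow> \<phi> g = (\<Sum>i<q. c i * \<chi>s i g)"
    and "h \<in> carrier G"
  shows "(\<Sum>x\<in>carrier G. \<Sum>y\<in>carrier G. \<phi> (commutator G x y \<otimes> h))
    = (of_nat (card (carrier G)))\<^sup>2 * (\<Sum>i<q. c i / (\<chi>s i \<one>)\<^sup>2 * \<chi>s i h)"
proof -
  interpret group G by fact
  have "(\<Sum>x\<in>carrier G. \<Sum>y\<in>carrier G. \<phi> (commutator G x y \<otimes> h))
      = (\<Sum>i<q. c i * (\<Sum>x\<in>carrier G. \<Sum>y\<in>carrier G. \<chi>s i (commutator G x y \<otimes> h)))"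
    using assms by (simp add: sum_distrib_left sum.swap[of _ "carrier G" "{..<q}"])
  also have "\<dots> = (\<Sum>i<q. c i * ((of_nat (card (carrier G)) / \<chi>s i \<one>)\<^sup>2 * \<chi>s i h))"
    using assms by (simp add: irr_char_sum_commutator)
  finally show ?thesis
    by (simp add: sum_distrib_left power_divide mult_ac)
qed

lemma comm_prob_inv:
  fixes G (structure)
  assumes "group G" "g \<in> carrier G"
  shows "comm_prob G (inv g) = comm_prob G g"
proof -
  have swap_iff: "commutator G y x = inv g \<longleftrightarrow> commutator G x y = g"
    if "x \<in> carrier G" "y \<in> carrier G" for x y
    using that assms by (metis commutator_swap group.inv_inv)
  have "bij_betw prod.swap {(x, y). x \<in> carrier G \<and> y \<in> carrier G \<and> commutator G x y = g}
      {(x, y). x \<in> carrier G \<and> y \<in> carrier G \<and> commutator G x y = inv g}"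
    by (intro bij_betw_byWitness[where f' = prod.swap])
      (auto simp: swap_iff intro: commutator_swap[OF assms(1)])
  then show ?thesis
    unfolding comm_prob_def by (simp add: bij_betw_same_card)
qed

lemma comm_prob_mult_le_sum_norm:
  fixes G (structure) and f :: "'a \<Rightarrow> 'c::real_normed_vector"
  assumes "group G" "finite (carrier G)" "g \<in> carrier G"
  shows "comm_prob G g * (real (card (carrier G)))\<^sup>2 * (norm (f \<one>))\<^sup>2
    \<le> (\<Sum>x\<in>carrier G. \<Sum>y\<in>carrier G. (norm (f (commutator G x y \<otimes> g)))\<^sup>2)"
proof -
  interpret group G by fact
  define P where "P = {(x, y). x \<in> carrier G \<and> y \<in> carrier G \<and> commutator G x y = inv g}"
  let ?F = "\<lambda>p. (norm (f (commutator G (fst p) (snd p) \<otimes> g)))\<^sup>2"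
  have F_on_P: "?F p = (norm (f \<one>))\<^sup>2" if "p \<in> P" for p
    using that assms(3) by (auto simp: P_def)
  have "card (carrier G) > 0"
    using assms by (auto simp: card_gt_0_iff)
  then have "comm_prob G g * (real (card (carrier G)))\<^sup>2 = real (card P)"
    using comm_prob_inv[OF assms(1,3)] unfolding comm_prob_def P_def by simp
  then have "comm_prob G g * (real (card (carrier G)))\<^sup>2 * (norm (f \<one>))\<^sup>2 = (\<Sum>p\<in>P. ?F p)"
    using F_on_P by simp
  also have "\<dots> \<le> (\<Sum>p\<in>carrier G \<times> carrier G. ?F p)"
    using assms(2) by (intro sum_mono2) (auto simp: P_def)
  also have "\<dots> = (\<Sum>x\<in>carrier G. \<Sum>y\<in>carrier G. (norm (f (commutator G x y \<otimes> g)))\<^sup>2)"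
    by (simp add: sum.cartesian_product case_prod_beta)
  finally show ?thesis .
qed

lemma comm_prob_le_char_square_decomposition:
  fixes G (structure)
  assumes "group G" "finite (carrier G)" "irr_char G \<chi>"
    and "\<And>i. i < q \<Longrightarrow> irr_char G (\<chi>s i)"
    and "\<And>g. g \<in> carrier G \<Longrightarrow> \<chi> g * cnj (\<chi> g) = (\<Sum>i<q. c i * \<chi>s i g)"
    and "g \<in> carrier G"
  shows "comm_prob G g \<le> Re (\<Sum>i<q. c i / (\<chi>s i \<one>)\<^sup>2 * \<chi>s i g)
    / Re (\<Sum>i<q. c i * \<chi>s i \<one>)"
proof -
  interpret group G by fact
  define N where "N = real (card (carrier G))"
  define S where "S = (\<Sum>i<q. c i / (\<chi>s i \<one>)\<^sup>2 * \<chi>s i g)"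
  obtain n where "n > 0" "\<chi> \<one> = of_nat n"
    using irr_char_degree[OF assms(1,3)] .
  then have norm_pos: "norm (\<chi> \<one>) > 0" by simp
  have "N > 0"
    using assms(2,6) by (auto simp: N_def card_gt_0_iff)
  have "(\<Sum>i<q. c i * \<chi>s i \<one>) = complex_of_real ((norm (\<chi> \<one>))\<^sup>2)"
    by (metis assms(5) complex_norm_square one_closed)
  then have denominator: "Re (\<Sum>i<q. c i * \<chi>s i \<one>) = (norm (\<chi> \<one>))\<^sup>2"
    by (simp only: Re_complex_of_real)
  have "(\<Sum>x\<in>carrier G. \<Sum>y\<in>carrier G. (norm (\<chi> (commutator G x y \<otimes> g)))\<^sup>2)
      = Re (\<Sum>x\<in>carrier G. \<Sum>y\<in>carrier G. \<chi> (commutator G x y \<otimes> g) * cnj (\<chi> (commutator G x y \<otimes> g)))"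
    unfolding Re_sum by (intro sum.cong refl) (metis Re_complex_of_real complex_norm_square)
  also have "\<dots> = N\<^sup>2 * Re S"
    unfolding S_def N_def
    by (subst sum_commutator_irr_char_combination[OF assms(1,2,4) assms(5) assms(6)]) simp_all
  finally have "comm_prob G g * N\<^sup>2 * (norm (\<chi> \<one>))\<^sup>2 \<le> N\<^sup>2 * Re S"
    using comm_prob_mult_le_sum_norm[OF assms(1,2,6), of \<chi>] by (simp add: N_def)
  then have "comm_prob G g * (norm (\<chi> \<one>))\<^sup>2 \<le> Re S"
    using \<open>N > 0\<close> by simp
  then show ?thesis
    unfolding denominator S_def[symmetric] using norm_pos by (simp add: pos_le_divide_eq)
qed

theorem corollary5:
  fixes G :: "('a, 'b) monoid_scheme"
    and \<chi> :: "'a \<Rightarrow> complex"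
    and q :: nat
    and a :: "nat \<Rightarrow> nat"
    and \<chi>s :: "nat \<Rightarrow> 'a \<Rightarrow> complex"
  assumes "group G"
    and "finite (carrier G)"
    and "irr_char G \<chi>"
    and "\<And>i. i < q \<Longrightarrow> a i > 0"
    and "\<And>i. i < q \<Longrightarrow> irr_char G (\<chi>s i)"
    and "\<And>i j. i < q \<Longrightarrow> j < q \<Longrightarrow> i \<noteq> j \<Longrightarrow>
           (\<exists>g\<in>carrier G. \<chi>s i g \<noteq> \<chi>s j g)"
    and "\<And>g. g \<in> carrier G \<Longrightarrow>
           \<chi> g * cnj (\<chi> g) = (\<Sum>i<q. of_nat (a i) * \<chi>s i g)"
  shows "(\<forall>g\<in>carrier G.
            comm_prob G g \<le>
              Re (\<Sum>i<q. (of_nat (a i) / (\<chi>s i \<one>\<^bsub>G\<^esub>)\<^sup>2) * \<chi>s i g)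
              / Re (\<Sum>i<q. of_nat (a i) * \<chi>s i \<one>\<^bsub>G\<^esub>))
       \<and> comm_prob G \<one>\<^bsub>G\<^esub> \<le>
              Re (\<Sum>i<q. of_nat (a i) / \<chi>s i \<one>\<^bsub>G\<^esub>)
              / Re (\<Sum>i<q. of_nat (a i) * \<chi>s i \<one>\<^bsub>G\<^esub>)"
proof
  note bound = comm_prob_le_char_square_decomposition[OF assms(1,2,3,5,7)]
  show "\<forall>g\<in>carrier G. comm_prob G g \<le>
      Re (\<Sum>i<q. (of_nat (a i) / (\<chi>s i \<one>\<^bsub>G\<^esub>)\<^sup>2) * \<chi>s i g)
      / Re (\<Sum>i<q. of_nat (a i) * \<chi>s i \<one>\<^bsub>G\<^esub>)"
    using bound by blast
  have "\<chi>s i \<one>\<^bsub>G\<^esub> \<noteq> 0" if "i < q" for i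
    by (rule irr_char_degree[OF assms(1) assms(5)[OF that]]) simp
  then have "(\<Sum>i<q. (of_nat (a i) / (\<chi>s i \<one>\<^bsub>G\<^esub>)\<^sup>2) * \<chi>s i \<one>\<^bsub>G\<^esub>)
      = (\<Sum>i<q. of_nat (a i) / \<chi>s i \<one>\<^bsub>G\<^esub>)"
    by (intro sum.cong) (simp_all add: power2_eq_square)
  then show "comm_prob G \<one>\<^bsub>G\<^esub> \<le> Re (\<Sum>i<q. of_nat (a i) / \<chi>s i \<one>\<^bsub>G\<^esub>)
      / Re (\<Sum>i<q. of_nat (a i) * \<chi>s i \<one>\<^bsub>G\<^esub>)"
    using bound[of "\<one>\<^bsub>G\<^esub>"] assms(1) by (simp add: group.is_monoid)
qed

end
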